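(* Let $A,B$ be finite nonempty subsets of a group $G$ and put $K=\langle BB^{-1}\rangle$. Then for every integer $j\ge1$, $$|B^j|\ge\min\Big(|K|,\frac{(j+1)|B|}{2}\Big),$$ and $$|AB|\ge \min\Big(|AK|,\ |A|+\frac{|B|}{2}\Big).$$
   Context: $XY=\{xy: x\in X, y\in Y\}$ denotes the Minkowski product, $B^j$ the $j$-fold product $B\cdots B$, $BB^{-1}=\{bc^{-1}:b,c\in B\}$, and $\langle T\rangle$ the subgroup generated by $T$ (its cardinality may be infinite). *)

theory Defs
  imports "HOL-Algebra.Algebra"
begin

fun set_pow :: "('a, 'b) monoid_scheme \<Rightarrow> 'a set \<Rightarrow> nat \<Rightarrow> 'a set" where
  "set_pow G B 0 = {\<one>\<^bsub>G\<^esub>}"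
| "set_pow G B (Suc n) = set_pow G B n <#>\<^bsub>G\<^esub> B"

end

theory Submission
  imports Defs
begin

text \<open>
  The heart of the matter is an isoperimetric inequality inside the subgroup
  \<open>K = \<langle>Q\<rangle>\<close> generated by a finite set \<open>Q\<close> with \<open>1 \<in> Q\<close>: every finite nonempty
  \<open>S \<subseteq> K\<close> with \<open>SQ \<noteq> K\<close> satisfies \<open>|SQ| \<ge> |S| + |Q|/2\<close>.  To prove it, let \<open>\<kappa>\<close> be
  the least value of \<open>|SR| - |S|\<close> over all such ("admissible") \<open>S\<close> and both
  \<open>R = Q\<close> and \<open>R = Q\<^sup>-\<^sup>1\<close>, and call an admissible set of least defect \<open>\<kappa>\<close> and least
  size \<open>n\<close> an atom.  Submodularity of \<open>S \<mapsto> |SQ|\<close>, together with the observation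
  that the complement of \<open>SQ\<close> in \<open>K\<close> is admissible for \<open>Q\<^sup>-\<^sup>1\<close>, shows that two
  intersecting atoms coincide; hence an atom through \<open>1\<close> is a proper subgroup \<open>H\<close>,
  and comparing \<open>H\<close>, \<open>Hq\<close> and \<open>Q\<close> with \<open>HQ\<close> yields \<open>|Q| \<le> 2\<kappa>\<close>.

  For the theorem, translate \<open>B\<close> to \<open>P = Bb\<^sup>-\<^sup>1\<close>, which contains \<open>1\<close> and generates
  \<open>K = \<langle>BB\<^sup>-\<^sup>1\<rangle>\<close>.  Either every left coset \<open>aK\<close> meeting \<open>A\<close> is filled by
  \<open>(A \<inter> aK)P\<close>, so that \<open>AB\<close> is as large as \<open>AK\<close>, or some coset is not, and the
  isoperimetric inequality applied to the translate of \<open>A \<inter> aK\<close> gives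
  \<open>|AB| \<ge> |A| + |B|/2\<close>.
\<close>

context group
begin

lemma mem_set_mult_iff: "z \<in> S <#> Q \<longleftrightarrow> (\<exists>x\<in>S. \<exists>q\<in>Q. z = x \<otimes> q)"
  unfolding set_mult_def by blast

lemma finite_set_mult: "finite S \<Longrightarrow> finite Q \<Longrightarrow> finite (S <#> Q)"
  unfolding set_mult_def by simp

lemma set_mult_Un_left: "(S \<union> T) <#> Q = (S <#> Q) \<union> (T <#> Q)"
  unfolding set_mult_def by blast

lemma set_mult_subgroup: "subgroup K G \<Longrightarrow> S \<subseteq> K \<Longrightarrow> R \<subseteq> K \<Longrightarrow> S <#> R \<subseteq> K"
  unfolding set_mult_def by (blast intro: subgroup.m_closed)

lemma subset_set_mult: "S \<subseteq> carrier G \<Longrightarrow> \<one> \<in> Q \<Longrightarrow> S \<subseteq> S <#> Q"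
  unfolding set_mult_def by force

lemma card_le_card_set_mult:
  "finite S \<Longrightarrow> finite Q \<Longrightarrow> S \<subseteq> carrier G \<Longrightarrow> \<one> \<in> Q \<Longrightarrow> card S \<le> card (S <#> Q)"
  by (simp add: card_mono finite_set_mult subset_set_mult)

lemma card_set_mult_submodular:
  assumes "finite S" "finite T" "finite Q"
  shows "card ((S \<inter> T) <#> Q) + card ((S \<union> T) <#> Q) \<le> card (S <#> Q) + card (T <#> Q)"
proof -
  have fin: "finite (S <#> Q)" "finite (T <#> Q)" using assms finite_set_mult by auto
  have "(S \<inter> T) <#> Q \<subseteq> (S <#> Q) \<inter> (T <#> Q)"
    unfolding set_mult_def by blast
  then have "card ((S \<inter> T) <#> Q) \<le> card ((S <#> Q) \<inter> (T <#> Q))"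
    using fin by (simp add: card_mono)
  then show ?thesis
    using card_Un_Int[OF fin] by (simp add: set_mult_Un_left)
qed

lemma translate_set_mult:
  assumes "a \<in> carrier G" "S \<subseteq> carrier G" "Q \<subseteq> carrier G"
  shows "((\<otimes>) a ` S) <#> Q = (\<otimes>) a ` (S <#> Q)"
  using assms by (force simp: set_mult_def m_assoc subsetD)

lemma card_translate: "a \<in> carrier G \<Longrightarrow> S \<subseteq> carrier G \<Longrightarrow> card ((\<otimes>) a ` S) = card S"
  by (rule card_image) (meson inj_on_cmult inj_on_subset)

lemma translate_inv_cancel:
  "a \<in> carrier G \<Longrightarrow> S \<subseteq> carrier G \<Longrightarrow> (\<otimes>) (inv a) ` ((\<otimes>) a ` S) = S"
  by (force simp: image_image m_assoc[symmetric] subsetD)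

lemma translate_subgroup: "subgroup K G \<Longrightarrow> a \<in> K \<Longrightarrow> (\<otimes>) a ` K = K"
  using coset_join3[of a K] subgroup.mem_carrier unfolding l_coset_def by fastforce

lemma mult_mem_translate_subgroup_iff:
  assumes K: "subgroup K G" and "a \<in> carrier G" "x \<in> carrier G" "p \<in> K"
  shows "x \<otimes> p \<in> (\<otimes>) a ` K \<longleftrightarrow> x \<in> (\<otimes>) a ` K"
proof
  have p: "p \<in> carrier G" "inv p \<in> K"
    using K \<open>p \<in> K\<close> by (auto intro: subgroup.mem_carrier subgroup.m_inv_closed)
  assume "x \<otimes> p \<in> (\<otimes>) a ` K"
  then obtain k where k: "k \<in> K" "x \<otimes> p = a \<otimes> k" by blast
  then have "x = a \<otimes> (k \<otimes> inv p)"
    using assms p subgroup.mem_carrier[OF K]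
    by (metis inv_solve_right m_assoc m_closed inv_closed)
  moreover have "k \<otimes> inv p \<in> K" using K k p by (simp add: subgroup.m_closed)
  ultimately show "x \<in> (\<otimes>) a ` K" by blast
next
  assume "x \<in> (\<otimes>) a ` K"
  then obtain k where k: "k \<in> K" "x = a \<otimes> k" by blast
  then have "x \<otimes> p = a \<otimes> (k \<otimes> p)"
    using assms subgroup.mem_carrier[OF K] by (simp add: m_assoc)
  moreover have "k \<otimes> p \<in> K" using K k assms by (simp add: subgroup.m_closed)
  ultimately show "x \<otimes> p \<in> (\<otimes>) a ` K" by blast
qed

lemma subgroup_disjoint_right_translate:
  assumes H: "subgroup H G" and q: "q \<in> carrier G" "q \<notin> H"
  shows "H \<inter> (\<lambda>h. h \<otimes> q) ` H = {}"
proof (rule ccontr)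
  assume "H \<inter> (\<lambda>h. h \<otimes> q) ` H \<noteq> {}"
  then obtain h h' where hh: "h \<in> H" "h' \<in> H" "h = h' \<otimes> q" by blast
  then have "q = inv h' \<otimes> h"
    using subgroup.mem_carrier[OF H] q by (simp add: m_assoc[symmetric])
  then show False using q(2) hh H by (metis subgroup.m_closed subgroup.m_inv_closed)
qed

lemma card_set_mult_coset_split:
  assumes K: "subgroup K G" and "P \<subseteq> K" "finite P" and A: "A \<subseteq> carrier G" "finite A"
    and a: "a \<in> carrier G"
  shows "card (A <#> P) = card ((A \<inter> (\<otimes>) a ` K) <#> P) + card ((A - (\<otimes>) a ` K) <#> P)"
proof -
  have in_coset: "x \<otimes> p \<in> (\<otimes>) a ` K \<longleftrightarrow> x \<in> (\<otimes>) a ` K" if "x \<in> A" "p \<in> P" for x p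
    using mult_mem_translate_subgroup_iff[OF K a] that A(1) \<open>P \<subseteq> K\<close> by blast
  have "(A \<inter> (\<otimes>) a ` K) <#> P \<subseteq> (\<otimes>) a ` K" "((A - (\<otimes>) a ` K) <#> P) \<inter> (\<otimes>) a ` K = {}"
    unfolding set_mult_def using in_coset by (auto, metis image_eqI)
  then have "((A \<inter> (\<otimes>) a ` K) <#> P) \<inter> ((A - (\<otimes>) a ` K) <#> P) = {}" by blast
  moreover have "A <#> P = ((A \<inter> (\<otimes>) a ` K) <#> P) \<union> ((A - (\<otimes>) a ` K) <#> P)"
    by (simp add: set_mult_Un_left[symmetric] Int_Diff_Un)
  ultimately show ?thesis
    using card_Un_disjoint finite_set_mult A(2) \<open>finite P\<close> by (metis finite_Diff finite_Int)
qed

lemma set_inv_eq_image: "set_inv Q = (\<lambda>q. inv q) ` Q"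
  unfolding SET_INV_def by auto

lemma set_inv_carrier: "Q \<subseteq> carrier G \<Longrightarrow> set_inv Q \<subseteq> carrier G"
  unfolding set_inv_eq_image by auto

lemma generate_set_inv:
  assumes "Q \<subseteq> carrier G"
  shows "generate G (set_inv Q) = generate G Q"
proof
  show "generate G (set_inv Q) \<subseteq> generate G Q"
    using assms generate_is_subgroup[OF assms] generate.incl[of _ Q G]
    by (intro generate_subgroup_incl) (auto simp: set_inv_eq_image subgroup.m_inv_closed)
  have "Q \<subseteq> generate G (set_inv Q)"
  proof
    fix q assume "q \<in> Q"
    then have "inv (inv q) \<in> generate G (set_inv Q)"
      by (intro generate.inv generate.incl) (auto simp: set_inv_eq_image)
    then show "q \<in> generate G (set_inv Q)" using \<open>q \<in> Q\<close> assms by (simp add: subsetD)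
  qed
  then show "generate G Q \<subseteq> generate G (set_inv Q)"
    using generate_is_subgroup[OF set_inv_carrier[OF assms]] by (rule generate_subgroup_incl)
qed

text \<open>
  The atom argument treats \<open>Q\<close> and \<open>Q\<^sup>-\<^sup>1\<close> symmetrically; both are generating sets
  containing \<open>1\<close>, of the same size and generating the same subgroup.
\<close>

lemma symmetric_generating_set:
  assumes Q: "Q \<subseteq> carrier G" "finite Q" "\<one> \<in> Q" and R: "R \<in> {Q, set_inv Q}"
  shows "R \<subseteq> carrier G \<and> finite R \<and> \<one> \<in> R \<and> generate G R = generate G Q
    \<and> {R, set_inv R} = {Q, set_inv Q} \<and> card R = card Q"
proof -
  have inv_Q: "set_inv Q \<subseteq> carrier G" "finite (set_inv Q)" "\<one> \<in> set_inv Q"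
    "generate G (set_inv Q) = generate G Q" "set_inv (set_inv Q) = Q" "card (set_inv Q) = card Q"
  proof -
    show "set_inv Q \<subseteq> carrier G" using set_inv_carrier[OF Q(1)] .
    show "finite (set_inv Q)" unfolding set_inv_eq_image using Q(2) by simp
    show "\<one> \<in> set_inv Q" unfolding set_inv_eq_image using Q(3) by (metis image_eqI inv_one)
    show "generate G (set_inv Q) = generate G Q" using generate_set_inv[OF Q(1)] .
    show "set_inv (set_inv Q) = Q"
      using Q(1) unfolding set_inv_eq_image image_image by (force simp: subsetD)
    show "card (set_inv Q) = card Q"
      unfolding set_inv_eq_image by (rule card_image) (meson Q(1) inj_on_subset inv_inj)
  qed
  from R have "R = Q \<or> R = set_inv Q" by simp
  then show ?thesis
  proof
    assume "R = Q" then show ?thesis using Q by simp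
  next
    assume "R = set_inv Q" then show ?thesis using inv_Q by (simp add: insert_commute)
  qed
qed

lemma complement_set_mult_set_inv:
  assumes K: "subgroup K G" and "Q \<subseteq> K"
  shows "(K - (S <#> Q)) <#> set_inv Q \<subseteq> K - S"
proof
  fix w assume "w \<in> (K - (S <#> Q)) <#> set_inv Q"
  then obtain z q where z: "z \<in> K" "z \<notin> S <#> Q" and q: "q \<in> Q" and w: "w = z \<otimes> inv q"
    using mem_set_mult_iff[of w "K - (S <#> Q)" "set_inv Q"] unfolding set_inv_eq_image by blast
  have zq: "z \<in> carrier G" "q \<in> carrier G" "q \<in> K"
    using z q assms by (auto intro: subgroup.mem_carrier)
  have "w \<in> K" using K z zq w by (simp add: subgroup.m_closed subgroup.m_inv_closed)
  moreover have "w \<notin> S"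
  proof
    assume "w \<in> S"
    moreover have "z = w \<otimes> q" using w zq by (simp add: m_assoc)
    ultimately show False using z(2) q unfolding mem_set_mult_iff by blast
  qed
  ultimately show "w \<in> K - S" by blast
qed

end

definition admissible :: "('a, 'b) monoid_scheme \<Rightarrow> 'a set \<Rightarrow> 'a set \<Rightarrow> 'a set \<Rightarrow> bool" where
  "admissible G K R S \<longleftrightarrow> S \<subseteq> K \<and> finite S \<and> S \<noteq> {} \<and> S <#>\<^bsub>G\<^esub> R \<noteq> K"

context group
begin

lemma admissible_card_le:
  assumes "subgroup K G" "finite R" "\<one> \<in> R" "admissible G K R S"
  shows "card S \<le> card (S <#> R)"
proof -
  have S: "S \<subseteq> carrier G" "finite S"
    using assms(4) subgroup.subset[OF assms(1)] unfolding admissible_def by auto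
  show ?thesis using card_le_card_set_mult[OF S(2) assms(2) S(1) assms(3)] .
qed

lemma admissible_subset:
  assumes K: "subgroup K G" and "R \<subseteq> K" and S: "admissible G K R S" and "T \<subseteq> S" "T \<noteq> {}"
  shows "admissible G K R T"
proof -
  have "T <#> R \<subseteq> S <#> R" using \<open>T \<subseteq> S\<close> by (rule mono_set_mult) simp
  moreover have "S <#> R \<subseteq> K"
    using S set_mult_subgroup[OF K _ \<open>R \<subseteq> K\<close>] unfolding admissible_def by blast
  ultimately have "T <#> R \<noteq> K" using S unfolding admissible_def by blast
  then show ?thesis
    using S \<open>T \<subseteq> S\<close> \<open>T \<noteq> {}\<close> unfolding admissible_def by (auto intro: finite_subset)
qed

lemma admissible_translate:
  assumes K: "subgroup K G" and R: "R \<subseteq> K" and a: "a \<in> K" and S: "admissible G K R S"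
  shows "admissible G K R ((\<otimes>) a ` S)"
proof -
  have SK: "S \<subseteq> K" and SR: "S <#> R \<noteq> K" using S unfolding admissible_def by auto
  have carr: "a \<in> carrier G" "S \<subseteq> carrier G" "R \<subseteq> carrier G"
    using a SK R subgroup.subset[OF K] by auto
  have "(\<otimes>) a ` (S <#> R) \<noteq> K"
  proof
    assume "(\<otimes>) a ` (S <#> R) = K"
    then have "S <#> R = (\<otimes>) (inv a) ` K"
      using translate_inv_cancel[OF carr(1) setmult_subset_G[OF carr(2,3)]] by simp
    also have "\<dots> = K" using translate_subgroup[OF K subgroup.m_inv_closed[OF K a]] .
    finally show False using SR by contradiction
  qed
  moreover have "(\<otimes>) a ` S \<subseteq> K" using SK a subgroup.m_closed[OF K] by auto
  ultimately show ?thesis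
    using S translate_set_mult[OF carr] unfolding admissible_def by auto
qed

end

locale atom_setting = group G for G (structure) +
  fixes K Q :: "'a set" and \<kappa> n :: nat
  assumes K_def: "K = generate G Q"
    and Q_carrier: "Q \<subseteq> carrier G" and finite_Q: "finite Q" and one_in_Q: "\<one> \<in> Q"
    and connectivity_le:
      "\<And>R S. R \<in> {Q, set_inv Q} \<Longrightarrow> admissible G K R S \<Longrightarrow> \<kappa> + card S \<le> card (S <#> R)"
    and atom_size_le:
      "\<And>R S. R \<in> {Q, set_inv Q} \<Longrightarrow> admissible G K R S \<Longrightarrow> card (S <#> R) = \<kappa> + card S
        \<Longrightarrow> n \<le> card S"
begin

definition atom :: "'a set \<Rightarrow> bool" where
  "atom S \<longleftrightarrow> admissible G K Q S \<and> card (S <#> Q) = \<kappa> + card S \<and> card S = n"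

lemma subgroup_K: "subgroup K G"
  unfolding K_def by (rule generate_is_subgroup[OF Q_carrier])

lemma Q_subset_K: "Q \<subseteq> K"
  unfolding K_def by (auto intro: generate.incl)

lemma K_minimal: "subgroup H G \<Longrightarrow> Q \<subseteq> H \<Longrightarrow> K \<subseteq> H"
  unfolding K_def by (rule generate_subgroup_incl)

lemma atom_props:
  assumes "atom S"
  shows "S \<subseteq> K" "finite S" "S \<noteq> {}" "S <#> Q \<noteq> K" "S <#> Q \<subseteq> K"
    "card (S <#> Q) = \<kappa> + n" "card S = n"
  using assms set_mult_subgroup[OF subgroup_K _ Q_subset_K]
  unfolding atom_def admissible_def by auto

lemma atom_translate:
  assumes S: "atom S" and a: "a \<in> K"
  shows "atom ((\<otimes>) a ` S)"
proof -
  have adm: "admissible G K Q S" and card_SQ: "card (S <#> Q) = \<kappa> + card S"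
    and card_S: "card S = n"
    using S unfolding atom_def by auto
  have carr: "a \<in> carrier G" "S \<subseteq> carrier G"
    using adm a subgroup.subset[OF subgroup_K] unfolding admissible_def by auto
  have "card (((\<otimes>) a ` S) <#> Q) = card ((\<otimes>) a ` (S <#> Q))"
    using translate_set_mult[OF carr Q_carrier] by (rule arg_cong)
  also have "\<dots> = card (S <#> Q)"
    using card_translate[OF carr(1) setmult_subset_G[OF carr(2) Q_carrier]] .
  finally show ?thesis
    using admissible_translate[OF subgroup_K Q_subset_K a adm] card_translate[OF carr] card_SQ card_S
    unfolding atom_def by simp
qed

text \<open>
  If \<open>K\<close> is finite, the complement of \<open>SQ\<close> for an atom \<open>S\<close> is admissible for
  \<open>Q\<^sup>-\<^sup>1\<close> with defect \<open>\<kappa>\<close>, hence has at least \<open>n\<close> elements.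
\<close>

lemma card_K_ge_atom_complement:
  assumes S: "atom S" and fin: "finite K"
  shows "\<kappa> + 2 * n \<le> card K"
proof -
  note S' = atom_props[OF S]
  define Z where "Z = K - (S <#> Q)"
  have K_large: "\<kappa> + n \<le> card K" using card_mono[OF fin S'(5)] S'(6) by simp
  have card_Z: "card Z = card K - (\<kappa> + n)"
    unfolding Z_def using card_Diff_subset[OF finite_subset[OF S'(5) fin] S'(5)] S'(6) by simp
  have Z_mult: "Z <#> set_inv Q \<subseteq> K - S"
    unfolding Z_def by (rule complement_set_mult_set_inv[OF subgroup_K Q_subset_K])
  have Z_adm: "admissible G K (set_inv Q) Z"
  proof -
    have "Z \<noteq> {}" unfolding Z_def using S'(4,5) by blast
    moreover have "Z <#> set_inv Q \<noteq> K" using Z_mult S'(1,3) by blast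
    ultimately show ?thesis unfolding admissible_def Z_def using fin by auto
  qed
  have "\<kappa> + card Z \<le> card (Z <#> set_inv Q)" using connectivity_le[OF _ Z_adm] by simp
  moreover have "card (Z <#> set_inv Q) \<le> card K - n"
    using card_mono[OF _ Z_mult] card_Diff_subset[OF S'(2,1)] S'(7) fin by simp
  ultimately have "card (Z <#> set_inv Q) = \<kappa> + card Z" using card_Z K_large by linarith
  then have "n \<le> card Z" using atom_size_le[OF _ Z_adm] by simp
  then show ?thesis using card_Z K_large by linarith
qed

lemma atom_union_proper:
  assumes S: "atom S" and T: "atom T" and meet: "S \<inter> T \<noteq> {}"
  shows "(S \<union> T) <#> Q \<noteq> K"
proof
  assume full: "(S \<union> T) <#> Q = K"
  note S' = atom_props[OF S] and T' = atom_props[OF T]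
  have "finite ((S \<union> T) <#> Q)" using S'(2) T'(2) finite_Q by (simp add: finite_set_mult)
  then have "\<kappa> + 2 * n \<le> card K" using card_K_ge_atom_complement[OF S] full by simp
  moreover have "admissible G K Q (S \<inter> T)"
    using admissible_subset[OF subgroup_K Q_subset_K _ _ meet] S unfolding atom_def by blast
  then have "\<kappa> + card (S \<inter> T) \<le> card ((S \<inter> T) <#> Q)" using connectivity_le by simp
  moreover have "card ((S \<inter> T) <#> Q) + card K \<le> 2 * (\<kappa> + n)"
    using card_set_mult_submodular[OF S'(2) T'(2) finite_Q] full S'(6) T'(6) by simp
  moreover have "card (S \<inter> T) > 0" using meet S'(2) by auto
  ultimately show False by arith
qed

lemma atoms_meeting_eq:
  assumes S: "atom S" and T: "atom T" and meet: "S \<inter> T \<noteq> {}"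
  shows "S = T"
proof -
  note S' = atom_props[OF S] and T' = atom_props[OF T]
  have "admissible G K Q (S \<inter> T)"
    using admissible_subset[OF subgroup_K Q_subset_K _ _ meet] S unfolding atom_def by blast
  moreover have "admissible G K Q (S \<union> T)"
    using atom_union_proper[OF S T meet] S' T' unfolding admissible_def by auto
  ultimately have
    "\<kappa> + card (S \<inter> T) \<le> card ((S \<inter> T) <#> Q)" "\<kappa> + card (S \<union> T) \<le> card ((S \<union> T) <#> Q)"
    by (auto intro: connectivity_le)
  moreover have "card (S \<inter> T) + card (S \<union> T) = 2 * n"
    using card_Un_Int[OF S'(2) T'(2)] S'(7) T'(7) by simp
  ultimately have "card ((S \<inter> T) <#> Q) = \<kappa> + card (S \<inter> T)"
    using card_set_mult_submodular[OF S'(2) T'(2) finite_Q] S'(6) T'(6) by linarith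
  then have "n \<le> card (S \<inter> T)"
    using \<open>admissible G K Q (S \<inter> T)\<close> by (intro atom_size_le) auto
  then have "S \<inter> T = S" "S \<inter> T = T"
    using S'(2,7) T'(2,7) card_subset_eq[of S "S \<inter> T"] card_subset_eq[of T "S \<inter> T"]
      card_mono[of S "S \<inter> T"] card_mono[of T "S \<inter> T"] by auto
  then show ?thesis by blast
qed

text \<open>Consequently an atom through \<open>1\<close> is invariant under its own translations: a subgroup.\<close>

lemma atom_subgroup:
  assumes H: "atom H" and one: "\<one> \<in> H"
  shows "subgroup H G"
proof -
  have carr: "H \<subseteq> carrier G" using atom_props(1)[OF H] subgroup.subset[OF subgroup_K] by blast
  have shift: "(\<otimes>) (inv x) ` H = H" if x: "x \<in> H" for x
  proof -
    have "inv x \<in> K" using x atom_props(1)[OF H] subgroup.m_inv_closed[OF subgroup_K] by blast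
    then have "atom ((\<otimes>) (inv x) ` H)" using atom_translate[OF H] by blast
    moreover have "\<one> \<in> (\<otimes>) (inv x) ` H" using x carr by (force intro!: image_eqI)
    ultimately show ?thesis using atoms_meeting_eq[OF _ H] one by blast
  qed
  have inv: "inv x \<in> H" if "x \<in> H" for x
    using shift[OF that] one that carr by (metis image_eqI r_one inv_closed subsetD)
  show ?thesis
  proof (rule subgroupI[OF carr])
    show "H \<noteq> {}" using one by blast
    show "inv x \<in> H" if "x \<in> H" for x using inv that .
    show "x \<otimes> y \<in> H" if "x \<in> H" "y \<in> H" for x y
      using shift[OF inv[OF that(1)]] that carr by (metis image_eqI inv_inv subsetD)
  qed
qed

lemma atom_through_one:
  assumes "atom S"
  obtains H where "atom H" "\<one> \<in> H"
proof -
  obtain x where x: "x \<in> S" using atom_props(3)[OF assms] by blast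
  then have "x \<in> carrier G" "inv x \<in> K"
    using atom_props(1)[OF assms] subgroup.mem_carrier[OF subgroup_K]
      subgroup.m_inv_closed[OF subgroup_K] by auto
  then show thesis
    using that[of "(\<otimes>) (inv x) ` S"] atom_translate[OF assms] x by (force intro!: image_eqI)
qed

text \<open>
  An atom \<open>H\<close> through \<open>1\<close> is a proper subgroup, so some \<open>q \<in> Q\<close>
  lies outside it; then \<open>H\<close> and \<open>Hq\<close> are disjoint inside \<open>HQ\<close>, giving \<open>n \<le> \<kappa>\<close>,
  while \<open>Q \<subseteq> HQ\<close> gives \<open>|Q| \<le> \<kappa> + n\<close>.
\<close>

lemma card_Q_le_twice_connectivity:
  assumes S: "atom S"
  shows "card Q \<le> 2 * \<kappa>"
proof -
  obtain H where H: "atom H" and one: "\<one> \<in> H" using atom_through_one[OF S] .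
  note H' = atom_props[OF H]
  have sub: "subgroup H G" using atom_subgroup[OF H one] .
  have carr: "H \<subseteq> carrier G" using subgroup.subset[OF sub] .
  have fin_HQ: "finite (H <#> Q)" using finite_set_mult[OF H'(2) finite_Q] .
  have "\<not> Q \<subseteq> H"
  proof
    assume "Q \<subseteq> H"
    then have "H = K" using K_minimal[OF sub] H'(1) by blast
    then show False using H'(4,5) subset_set_mult[OF carr one_in_Q] by blast
  qed
  then obtain q where q: "q \<in> Q" "q \<notin> H" by blast
  have qc: "q \<in> carrier G" using q Q_carrier by blast
  have "(\<lambda>h. h \<otimes> q) ` H \<subseteq> H <#> Q" using q(1) unfolding set_mult_def by blast
  then have "H \<union> (\<lambda>h. h \<otimes> q) ` H \<subseteq> H <#> Q" using subset_set_mult[OF carr one_in_Q] by blast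
  then have "card (H \<union> (\<lambda>h. h \<otimes> q) ` H) \<le> \<kappa> + n" using H'(6) card_mono[OF fin_HQ] by metis
  moreover have "card ((\<lambda>h. h \<otimes> q) ` H) = n"
    using card_image[OF inj_on_g[OF carr qc]] H'(7) by simp
  ultimately have "n \<le> \<kappa>"
    using card_Un_disjoint[OF H'(2) _ subgroup_disjoint_right_translate[OF sub qc q(2)]] H'(2,7)
    by simp
  moreover have "Q \<subseteq> H <#> Q" using one Q_carrier unfolding set_mult_def by force
  then have "card Q \<le> \<kappa> + n" using card_mono[OF fin_HQ] H'(6) by simp
  ultimately show ?thesis by simp
qed

end

lemma lexicographic_minimizer:
  fixes d s :: "'p \<Rightarrow> nat"
  assumes "C p"
  obtains q where "C q" "\<And>p. C p \<Longrightarrow> d q \<le> d p" "\<And>p. C p \<Longrightarrow> d p = d q \<Longrightarrow> s q \<le> s p"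
proof -
  obtain p0 where p0: "C p0" "\<forall>p. C p \<longrightarrow> d p0 \<le> d p"
    using ex_has_least_nat[of C p d] assms by blast
  obtain q where "C q \<and> d q = d p0" "\<forall>p. C p \<and> d p = d p0 \<longrightarrow> s q \<le> s p"
    using ex_has_least_nat[of "\<lambda>p. C p \<and> d p = d p0" p0 s] p0(1) by blast
  then show thesis using that p0(2) by auto
qed

context group
begin

text \<open>
  The minimiser of the defect, and then of
  the size, over both \<open>Q\<close> and \<open>Q\<^sup>-\<^sup>1\<close> is an atom in the sense of the locale above.
\<close>

theorem isoperimetric_inequality:
  assumes Q: "Q \<subseteq> carrier G" "finite Q" "\<one> \<in> Q"
    and S: "admissible G (generate G Q) Q S"
  shows "card Q + 2 * card S \<le> 2 * card (S <#> Q)"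
proof -
  define K where "K = generate G Q"
  define cand where "cand p \<longleftrightarrow> fst p \<in> {Q, set_inv Q} \<and> admissible G K (fst p) (snd p)"
    for p :: "'a set \<times> 'a set"
  define defect where "defect p = card (snd p <#> fst p) - card (snd p)"
    for p :: "'a set \<times> 'a set"
  note gens = symmetric_generating_set[OF Q]
  have no_loss: "card T \<le> card (T <#> R)" if "cand (R, T)" for R T
    using that gens[of R] admissible_card_le[OF generate_is_subgroup[OF Q(1)]]
    unfolding cand_def K_def by auto
  have "cand (Q, S)" using S unfolding cand_def K_def by simp
  then obtain R Y where RY: "cand (R, Y)" and least_defect: "\<And>p. cand p \<Longrightarrow> defect (R, Y) \<le> defect p"
    and least_size: "\<And>p. cand p \<Longrightarrow> defect p = defect (R, Y) \<Longrightarrow> card Y \<le> card (snd p)"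
    by (rule lexicographic_minimizer[where d = defect and s = "\<lambda>p. card (snd p)"]) auto
  define \<kappa> where "\<kappa> = defect (R, Y)"
  have R: "R \<in> {Q, set_inv Q}" and Y: "admissible G K R Y" using RY unfolding cand_def by auto
  note R_gens = gens[OF R]
  have setting: "atom_setting G K R \<kappa> (card Y)"
  proof (unfold_locales)
    show "K = generate G R" "R \<subseteq> carrier G" "finite R" "\<one> \<in> R" using R_gens K_def by auto
    show "\<kappa> + card T \<le> card (T <#> R')" if "R' \<in> {R, set_inv R}" "admissible G K R' T" for R' T
      using that R_gens least_defect[of "(R', T)"] no_loss[of R' T]
      unfolding cand_def defect_def \<kappa>_def by auto
    show "card Y \<le> card T"
      if "R' \<in> {R, set_inv R}" "admissible G K R' T" "card (T <#> R') = \<kappa> + card T" for R' T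
      using that R_gens least_size[of "(R', T)"] unfolding cand_def defect_def \<kappa>_def by auto
  qed
  have "atom_setting.atom G K R \<kappa> (card Y) Y"
    unfolding atom_setting.atom_def[OF setting] using Y no_loss[OF RY] by (simp add: \<kappa>_def defect_def)
  then have "card Q \<le> 2 * \<kappa>"
    using atom_setting.card_Q_le_twice_connectivity[OF setting] R_gens by simp
  moreover have "\<kappa> + card S \<le> card (S <#> Q)"
    using least_defect[OF \<open>cand (Q, S)\<close>] no_loss[OF \<open>cand (Q, S)\<close>]
    unfolding defect_def \<kappa>_def by simp
  ultimately show ?thesis by simp
qed

lemma product_full_cosets:
  assumes "P \<subseteq> K" and full: "\<forall>a\<in>A. (A \<inter> (\<otimes>) a ` K) <#> P = (\<otimes>) a ` K"
  shows "A <#> P = A <#> K"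
proof
  show "A <#> P \<subseteq> A <#> K" using \<open>P \<subseteq> K\<close> by (rule mono_set_mult[OF subset_refl])
  show "A <#> K \<subseteq> A <#> P"
  proof
    fix z assume "z \<in> A <#> K"
    then obtain a k where "a \<in> A" "k \<in> K" "z = a \<otimes> k" unfolding mem_set_mult_iff by blast
    then have "z \<in> (A \<inter> (\<otimes>) a ` K) <#> P" using full by auto
    then show "z \<in> A <#> P" unfolding mem_set_mult_iff by blast
  qed
qed

text \<open>
  Otherwise the part of \<open>A\<close> in a deficient coset, translated into \<open>K\<close>, is admissible,
  so it gains \<open>|P|/2\<close> by the isoperimetric inequality; the rest of \<open>A\<close> does not lose.
\<close>

lemma product_deficient_coset:
  assumes P: "P \<subseteq> carrier G" "finite P" "\<one> \<in> P" and K: "K = generate G P"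
    and A: "A \<subseteq> carrier G" "finite A" and a: "a \<in> A"
    and deficient: "(A \<inter> (\<otimes>) a ` K) <#> P \<noteq> (\<otimes>) a ` K"
  shows "2 * card A + card P \<le> 2 * card (A <#> P)"
proof -
  have sub: "subgroup K G" unfolding K by (rule generate_is_subgroup[OF P(1)])
  have PK: "P \<subseteq> K" unfolding K by (auto intro: generate.incl)
  have ac: "a \<in> carrier G" "inv a \<in> carrier G" using a A(1) by auto
  define A1 where "A1 = A \<inter> (\<otimes>) a ` K"
  have A_rest: "A - A1 = A - (\<otimes>) a ` K" unfolding A1_def by blast
  have A1: "A1 \<subseteq> carrier G" "finite A1" using A unfolding A1_def by auto
  have A1P: "A1 <#> P \<subseteq> carrier G" using setmult_subset_G[OF A1(1) P(1)] .
  have "a \<in> A1" unfolding A1_def using a ac subgroup.one_closed[OF sub] by force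
  define S where "S = (\<otimes>) (inv a) ` A1"
  have "S \<subseteq> (\<otimes>) (inv a) ` ((\<otimes>) a ` K)" unfolding S_def A1_def by blast
  then have SK: "S \<subseteq> K" using translate_inv_cancel[OF ac(1) subgroup.subset[OF sub]] by simp
  have SP: "S <#> P = (\<otimes>) (inv a) ` (A1 <#> P)"
    unfolding S_def using translate_set_mult[OF ac(2) A1(1) P(1)] .
  have "S <#> P \<noteq> K"
  proof
    assume "S <#> P = K"
    then have "A1 <#> P = (\<otimes>) a ` K" using translate_inv_cancel[OF ac(2) A1P] SP ac by simp
    then show False using deficient unfolding A1_def by contradiction
  qed
  then have "admissible G K P S" using SK \<open>a \<in> A1\<close> A1(2) unfolding admissible_def S_def by auto
  then have "card P + 2 * card S \<le> 2 * card (S <#> P)"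
    using isoperimetric_inequality[OF P] K by simp
  moreover have "card S = card A1" unfolding S_def by (rule card_translate[OF ac(2) A1(1)])
  moreover have "card (S <#> P) = card (A1 <#> P)" unfolding SP by (rule card_translate[OF ac(2) A1P])
  moreover have "card A = card A1 + card (A - A1)"
    using card_Un_disjoint[of A1 "A - A1"] A(2) A1(2) unfolding A1_def by (simp add: Int_Diff_Un)
  moreover have "card (A - A1) \<le> card ((A - A1) <#> P)"
    using card_le_card_set_mult[of "A - A1" P] A P(2,3) by auto
  moreover have "card (A <#> P) = card (A1 <#> P) + card ((A - A1) <#> P)"
    using card_set_mult_coset_split[OF sub PK P(2) A ac(1)] unfolding A_rest unfolding A1_def .
  ultimately show ?thesis by simp
qed

lemma product_dichotomy_normalized:
  assumes P: "P \<subseteq> carrier G" "finite P" "\<one> \<in> P" and K: "K = generate G P"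
    and A: "A \<subseteq> carrier G" "finite A"
  shows "(finite (A <#> K) \<and> card (A <#> K) \<le> card (A <#> P)) \<or> 2 * card A + card P \<le> 2 * card (A <#> P)"
proof (cases "\<forall>a\<in>A. (A \<inter> (\<otimes>) a ` K) <#> P = (\<otimes>) a ` K")
  case True
  have "P \<subseteq> K" unfolding K by (auto intro: generate.incl)
  then have "A <#> P = A <#> K" using True by (rule product_full_cosets)
  then show ?thesis using finite_set_mult[OF A(2) P(2)] by simp
next
  case False
  then show ?thesis using product_deficient_coset[OF P K A] by blast
qed

lemma generate_differences:
  assumes B: "B \<subseteq> carrier G" and b: "b \<in> B"
  shows "generate G (B <#> set_inv B) = generate G ((\<lambda>x. x \<otimes> inv b) ` B)"
proof
  let ?H = "generate G ((\<lambda>x. x \<otimes> inv b) ` B)"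
  have bc: "b \<in> carrier G" using B b by blast
  have diffs: "B <#> set_inv B \<subseteq> carrier G" using setmult_subset_G[OF B set_inv_carrier[OF B]] .
  have shifted: "(\<lambda>x. x \<otimes> inv b) ` B \<subseteq> carrier G" using B bc by auto
  have "x \<otimes> inv b \<in> B <#> set_inv B" if "x \<in> B" for x
    using that b unfolding mem_set_mult_iff set_inv_eq_image by blast
  then have "(\<lambda>x. x \<otimes> inv b) ` B \<subseteq> generate G (B <#> set_inv B)"
    by (auto intro: generate.incl)
  then show "?H \<subseteq> generate G (B <#> set_inv B)"
    using generate_is_subgroup[OF diffs] by (rule generate_subgroup_incl)
  have "x \<otimes> inv y \<in> ?H" if "x \<in> B" "y \<in> B" for x y
  proof -
    have xy: "x \<in> carrier G" "y \<in> carrier G" using that B by auto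
    have "x \<otimes> inv b \<in> ?H" "y \<otimes> inv b \<in> ?H" using that by (auto intro: generate.incl)
    then have "(x \<otimes> inv b) \<otimes> inv (y \<otimes> inv b) \<in> ?H"
      using subgroup.m_closed[OF generate_is_subgroup[OF shifted]]
        subgroup.m_inv_closed[OF generate_is_subgroup[OF shifted]] by blast
    moreover have "(x \<otimes> inv b) \<otimes> inv (y \<otimes> inv b) = x \<otimes> inv y"
      using xy bc by (simp add: inv_mult_group m_assoc) (simp add: m_assoc[symmetric])
    ultimately show ?thesis by simp
  qed
  then have "B <#> set_inv B \<subseteq> ?H"
    unfolding set_inv_eq_image by (auto simp: mem_set_mult_iff)
  then show "generate G (B <#> set_inv B) \<subseteq> ?H"
    using generate_is_subgroup[OF shifted] by (rule generate_subgroup_incl)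
qed

lemma set_mult_right_translate:
  assumes "A \<subseteq> carrier G" "B \<subseteq> carrier G" "c \<in> carrier G"
  shows "A <#> ((\<lambda>x. x \<otimes> c) ` B) = (\<lambda>z. z \<otimes> c) ` (A <#> B)"
  using assms unfolding set_mult_def by (auto simp: m_assoc subsetD image_iff) blast

theorem product_dichotomy:
  assumes A: "A \<subseteq> carrier G" "finite A" and B: "B \<subseteq> carrier G" "finite B" "B \<noteq> {}"
    and K: "K = generate G (B <#> set_inv B)"
  shows "(finite (A <#> K) \<and> card (A <#> K) \<le> card (A <#> B)) \<or> 2 * card A + card B \<le> 2 * card (A <#> B)"
proof -
  obtain b where b: "b \<in> B" using B(3) by blast
  have bc: "inv b \<in> carrier G" using b B(1) by blast
  define P where "P = (\<lambda>x. x \<otimes> inv b) ` B"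
  have P: "P \<subseteq> carrier G" "finite P" "\<one> \<in> P"
    unfolding P_def using B b bc by (auto intro!: image_eqI[of _ _ b])
  have KP: "K = generate G P" unfolding K P_def by (rule generate_differences[OF B(1) b])
  have "card P = card B" unfolding P_def by (rule card_image[OF inj_on_g[OF B(1) bc]])
  moreover have "card (A <#> P) = card (A <#> B)"
    unfolding P_def set_mult_right_translate[OF A(1) B(1) bc]
    by (rule card_image[OF inj_on_g[OF setmult_subset_G[OF A(1) B(1)] bc]])
  ultimately show ?thesis using product_dichotomy_normalized[OF P KP A] by simp
qed

lemma set_pow_props:
  assumes "B \<subseteq> carrier G" "finite B" "B \<noteq> {}"
  shows "set_pow G B j \<subseteq> carrier G \<and> finite (set_pow G B j) \<and> set_pow G B j \<noteq> {}"
proof (induction j)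
  case 0
  then show ?case by simp
next
  case (Suc j)
  then have "set_pow G B j <#> B \<noteq> {}" using assms(3) unfolding set_mult_def by blast
  then show ?case using Suc assms setmult_subset_G finite_set_mult by simp
qed

lemma set_pow_one: "B \<subseteq> carrier G \<Longrightarrow> set_pow G B 1 = B"
  using lcos_mult_one by (simp add: l_coset_eq_set_mult)

text \<open>A product \<open>AK\<close> with \<open>A\<close> nonempty contains a translate of \<open>K\<close>.\<close>

lemma card_subgroup_le_set_mult:
  assumes K: "subgroup K G" and A: "A \<subseteq> carrier G" "A \<noteq> {}" and fin: "finite (A <#> K)"
  shows "finite K \<and> card K \<le> card (A <#> K)"
proof -
  obtain a where a: "a \<in> A" using A(2) by blast
  have "(\<otimes>) a ` K \<subseteq> A <#> K" using a unfolding set_mult_def by blast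
  moreover have "inj_on ((\<otimes>) a) K"
    using a A(1) subgroup.subset[OF K] inj_on_cmult inj_on_subset by blast
  ultimately show ?thesis
    using fin by (metis card_image card_mono finite_imageD finite_subset)
qed

theorem power_dichotomy:
  assumes B: "B \<subseteq> carrier G" "finite B" "B \<noteq> {}" and K: "K = generate G (B <#> set_inv B)"
    and "1 \<le> j"
  shows "(finite K \<and> card K \<le> card (set_pow G B j)) \<or> (j + 1) * card B \<le> 2 * card (set_pow G B j)"
  using \<open>1 \<le> j\<close>
proof (induction j rule: nat_induct_at_least)
  case base
  then show ?case using set_pow_one[OF B(1)] by simp
next
  case (Suc j)
  define C where "C = set_pow G B j"
  have C: "C \<subseteq> carrier G" "finite C" "C \<noteq> {}" using set_pow_props[OF B] unfolding C_def by auto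
  have step: "set_pow G B (Suc j) = C <#> B" unfolding C_def by simp
  have sub: "subgroup K G"
    unfolding K by (rule generate_is_subgroup[OF setmult_subset_G[OF B(1) set_inv_carrier[OF B(1)]]])
  from product_dichotomy[OF C(1,2) B K] show ?case
  proof
    assume "finite (C <#> K) \<and> card (C <#> K) \<le> card (C <#> B)"
    then show ?thesis using card_subgroup_le_set_mult[OF sub C(1,3)] step by auto
  next
    assume "2 * card C + card B \<le> 2 * card (C <#> B)"
    then show ?thesis using Suc.IH step unfolding C_def by auto
  qed
qed

end

lemma min_le_of_dichotomy:
  fixes x :: real
  assumes "(finite S \<and> card S \<le> m) \<or> x \<le> real m"
  shows "(if finite S then min (real (card S)) x else x) \<le> real m"
  using assms by auto

theorem mainTheorem10:
  fixes G (structure) and A B :: "'a set"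
  assumes "group G"
    and "A \<subseteq> carrier G" and "finite A" and "A \<noteq> {}"
    and "B \<subseteq> carrier G" and "finite B" and "B \<noteq> {}"
  defines "K \<equiv> generate G (B <#> set_inv B)"
  shows "(\<forall>j::nat. j \<ge> 1 \<longrightarrow>
           real (card (set_pow G B j)) \<ge>
             (if finite K then min (real (card K)) (real (j + 1) * real (card B) / 2)
              else real (j + 1) * real (card B) / 2))
         \<and> real (card (A <#> B)) \<ge>
           (if finite (A <#> K) then min (real (card (A <#> K))) (real (card A) + real (card B) / 2)
            else real (card A) + real (card B) / 2)"
proof -
  interpret group G by fact
  have B: "B \<subseteq> carrier G" "finite B" "B \<noteq> {}" and K: "K = generate G (B <#> set_inv B)"
    using assms by auto
  show ?thesis
  proof (intro conjI allI impI min_le_of_dichotomy)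
    fix j :: nat assume "j \<ge> 1"
    have "real (j + 1) * real (card B) / 2 \<le> real (card (set_pow G B j))"
      if "(j + 1) * card B \<le> 2 * card (set_pow G B j)"
      using of_nat_mono[where 'a = real, OF that] by (simp add: algebra_simps)
    then show "(finite K \<and> card K \<le> card (set_pow G B j))
        \<or> real (j + 1) * real (card B) / 2 \<le> real (card (set_pow G B j))"
      using power_dichotomy[OF B K \<open>j \<ge> 1\<close>] by blast
  next
    have "real (card A) + real (card B) / 2 \<le> real (card (A <#> B))"
      if "2 * card A + card B \<le> 2 * card (A <#> B)"
      using of_nat_mono[where 'a = real, OF that] by simp
    then show "(finite (A <#> K) \<and> card (A <#> K) \<le> card (A <#> B))
        \<or> real (card A) + real (card B) / 2 \<le> real (card (A <#> B))"
      using product_dichotomy[OF assms(2,3) B K] by blast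
  qed
qed

end
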